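(* If $\mathbb{X}\in p\mathsf{Ch}^*_\mathbb{Q}$ is an $\mathbb{I}$-cell complex, then $\mathbb{X}$ is locally compact in degrees $k>0$, i.e. the persistence module $\mathbb{X}^k$ is locally compact for every $k>0$.
   Context: $p\mathsf{Ch}^*_\mathbb{Q}=\mathsf{Fun}([0,\infty),\mathsf{Ch}^*_\mathbb{Q})$, non-negatively graded rational cochain complexes; $\mathbb{X}^k$ is the persistence module of degree-$k$ cochains. $S^k=\mathbb{Q}$ in degree $k$; $D^k$ ($k\ge1$) is $\mathbb{Q}$ in degrees $k-1,k$ with identity differential; $D^0=0$. For $0\le s<t<\infty$, $\mathbb{S}^k_{[s,t)}$ is $0$ at $r<s$, $S^k$ at $s\le r<t$, $D^k$ at $r\ge t$; $\mathbb{S}^k_{[s,\infty)}$ is $0$ at $r<s$ and $S^k$ at $r\ge s$; $\mathbb{D}^k_s$ is $0$ at $r<s$ and $D^k$ at $r\ge s$. $\mathbb{I}=\{\mathbb{S}^k_{[s,t)}\to\mathbb{D}^k_s: k\in\mathbb{N},\ 0\le s<t\le\infty\}$. An $\mathbb{I}$-cell complex is an object $\mathbb{X}$ such that $0\to\mathbb{X}$ is a transfinite composite of maps each of which is a pushout of a direct sum (over an arbitrary set) of maps in $\mathbb{I}$. A persistence module is locally compact if every element lies in a submodule that is a compact object of the category of persistence modules (equivalently a finite direct sum of interval modules $\mathbb{I}_{[a,b)}$). *)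

theory Defs
  imports Main "HOL-Library.Extended_Real" "HOL-Library.Function_Algebras"
begin

class qvs = ab_group_add +
  fixes qscale :: "rat \<Rightarrow> 'a \<Rightarrow> 'a"
  assumes qscale_right_distrib: "qscale a (x + y) = qscale a x + qscale a y"
    and qscale_left_distrib: "qscale (a + b) x = qscale a x + qscale b x"
    and qscale_assoc: "qscale a (qscale b x) = qscale (a * b) x"
    and qscale_one: "qscale 1 x = x"

instantiation rat :: qvs
begin
definition qscale_rat :: "rat \<Rightarrow> rat \<Rightarrow> rat" where "qscale_rat a x = a * x"
instance by standard (auto simp: qscale_rat_def algebra_simps)
end

instantiation "fun" :: (type, qvs) qvs
begin
definition qscale_fun :: "rat \<Rightarrow> ('a \<Rightarrow> 'b) \<Rightarrow> 'a \<Rightarrow> 'b" where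
  "qscale_fun a f = (\<lambda>i. qscale a (f i))"
instance by standard (auto simp: qscale_fun_def fun_eq_iff qscale_right_distrib
    qscale_left_distrib qscale_assoc qscale_one)
end

definition qsubspace :: "'a::qvs set \<Rightarrow> bool" where
  "qsubspace V \<longleftrightarrow> 0 \<in> V \<and> (\<forall>x\<in>V. \<forall>y\<in>V. x + y \<in> V) \<and> (\<forall>a. \<forall>x\<in>V. qscale a x \<in> V)"

definition qlinear_on :: "'a::qvs set \<Rightarrow> 'b::qvs set \<Rightarrow> ('a \<Rightarrow> 'b) \<Rightarrow> bool" where
  "qlinear_on V W f \<longleftrightarrow> (\<forall>x\<in>V. f x \<in> W) \<and> (\<forall>x\<in>V. \<forall>y\<in>V. f (x + y) = f x + f y)
     \<and> (\<forall>a. \<forall>x\<in>V. f (qscale a x) = qscale a (f x))"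

definition is_pmod :: "(real \<Rightarrow> 'a::qvs set) \<Rightarrow> (real \<Rightarrow> real \<Rightarrow> 'a \<Rightarrow> 'a) \<Rightarrow> bool" where
  "is_pmod P T \<longleftrightarrow> (\<forall>r\<ge>0. qsubspace (P r))
     \<and> (\<forall>r s. 0 \<le> r \<and> r \<le> s \<longrightarrow> qlinear_on (P r) (P s) (T r s))
     \<and> (\<forall>r\<ge>0. \<forall>x\<in>P r. T r r x = x)
     \<and> (\<forall>r s u. 0 \<le> r \<and> r \<le> s \<and> s \<le> u \<longrightarrow> (\<forall>x\<in>P r. T s u (T r s x) = T r u x))"

record 'a pcx =
  cx :: "real \<Rightarrow> nat \<Rightarrow> 'a set"
  tr :: "real \<Rightarrow> real \<Rightarrow> nat \<Rightarrow> 'a \<Rightarrow> 'a"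
  df :: "real \<Rightarrow> nat \<Rightarrow> 'a \<Rightarrow> 'a"

text \<open>cx X r k = X^k_r, tr X r s k = structure map X^k_r \<rightarrow> X^k_s, df X r k = differential
  X^k_r \<rightarrow> X^(k+1)_r.\<close>
definition is_pcx :: "'a::qvs pcx \<Rightarrow> bool" where
  "is_pcx X \<longleftrightarrow> (\<forall>k. is_pmod (\<lambda>r. cx X r k) (\<lambda>r s. tr X r s k))
     \<and> (\<forall>r\<ge>0. \<forall>k. qlinear_on (cx X r k) (cx X r (Suc k)) (df X r k))
     \<and> (\<forall>r\<ge>0. \<forall>k. \<forall>x\<in>cx X r k. df X r (Suc k) (df X r k x) = 0)
     \<and> (\<forall>r s k. 0 \<le> r \<and> r \<le> s \<longrightarrow>
          (\<forall>x\<in>cx X r k. tr X r s (Suc k) (df X r k x) = df X s k (tr X r s k x)))"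

definition pcx_hom :: "'a::qvs pcx \<Rightarrow> 'b::qvs pcx \<Rightarrow> (real \<Rightarrow> nat \<Rightarrow> 'a \<Rightarrow> 'b) \<Rightarrow> bool" where
  "pcx_hom X Y f \<longleftrightarrow> (\<forall>r\<ge>0. \<forall>k. qlinear_on (cx X r k) (cx Y r k) (f r k))
     \<and> (\<forall>r s k. 0 \<le> r \<and> r \<le> s \<longrightarrow>
          (\<forall>x\<in>cx X r k. f s k (tr X r s k x) = tr Y r s k (f r k x)))
     \<and> (\<forall>r\<ge>0. \<forall>k. \<forall>x\<in>cx X r k. f r (Suc k) (df X r k x) = df Y r k (f r k x))"

text \<open>cell k s t, for t > s, is the sphere S^k_[s,t) (t = \<infinity> allowed);
  cell k s (ereal s) is the disk D^k_s. Both are realised with elements in rat.\<close>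
definition cell_cx :: "nat \<Rightarrow> real \<Rightarrow> ereal \<Rightarrow> real \<Rightarrow> nat \<Rightarrow> rat set" where
  "cell_cx k s t r m =
     (if (s \<le> r \<and> ereal r < t \<and> m = k) \<or> (s \<le> r \<and> t \<le> ereal r \<and> 1 \<le> k \<and> (m = k - 1 \<or> m = k))
      then UNIV else {0})"

definition cell :: "nat \<Rightarrow> real \<Rightarrow> ereal \<Rightarrow> rat pcx" where
  "cell k s t = \<lparr>cx = cell_cx k s t,
      tr = (\<lambda>r r' m x. if cell_cx k s t r' m = UNIV then x else 0),
      df = (\<lambda>r m x. if t \<le> ereal r \<and> 1 \<le> k \<and> m = k - 1 then x else 0)\<rparr>"

abbreviation Sph :: "nat \<Rightarrow> real \<Rightarrow> ereal \<Rightarrow> rat pcx" where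
  "Sph k s t \<equiv> cell k s t"

abbreviation Dsk :: "nat \<Rightarrow> real \<Rightarrow> rat pcx" where
  "Dsk k s \<equiv> cell k s (ereal s)"

definition gen_map :: "nat \<Rightarrow> real \<Rightarrow> real \<Rightarrow> nat \<Rightarrow> rat \<Rightarrow> rat" where
  "gen_map k s r m x = (if cell_cx k s (ereal s) r m = UNIV then x else 0)"

text \<open>g : Y \<rightarrow> Y' is a pushout of the direct sum over J of the generating maps
  S^{kk j}_[ss j, tt j) \<rightarrow> D^{kk j}_{ss j}, along attaching maps f j, with h j : D_j \<rightarrow> Y'
  the other leg of the square. Colimits in pCh are computed pointwise, and a commutative
  square of Q-vector spaces A \<rightarrow> B, A \<rightarrow> C, B \<rightarrow> P, C \<rightarrow> P is a pushout iff B \<oplus> C \<rightarrow> P is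
  surjective with kernel the image of A; that is what is written out below (with A, C the
  direct sums, whose elements are finitely supported families).\<close>
definition cell_pushout ::
  "'b::qvs pcx \<Rightarrow> 'b pcx \<Rightarrow> (real \<Rightarrow> nat \<Rightarrow> 'b \<Rightarrow> 'b) \<Rightarrow> 'j set \<Rightarrow> ('j \<Rightarrow> nat) \<Rightarrow> ('j \<Rightarrow> real)
   \<Rightarrow> ('j \<Rightarrow> ereal) \<Rightarrow> ('j \<Rightarrow> real \<Rightarrow> nat \<Rightarrow> rat \<Rightarrow> 'b) \<Rightarrow> ('j \<Rightarrow> real \<Rightarrow> nat \<Rightarrow> rat \<Rightarrow> 'b) \<Rightarrow> bool" where
  "cell_pushout Y Y' g J kk ss tt f h \<longleftrightarrow>
     (\<forall>j\<in>J. 0 \<le> ss j \<and> ereal (ss j) < tt j)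
     \<and> pcx_hom Y Y' g
     \<and> (\<forall>j\<in>J. pcx_hom (Sph (kk j) (ss j) (tt j)) Y (f j))
     \<and> (\<forall>j\<in>J. pcx_hom (Dsk (kk j) (ss j)) Y' (h j))
     \<and> (\<forall>j\<in>J. \<forall>r\<ge>0. \<forall>m. \<forall>x\<in>cell_cx (kk j) (ss j) (tt j) r m.
          g r m (f j r m x) = h j r m (gen_map (kk j) (ss j) r m x))
     \<and> (\<forall>r\<ge>0. \<forall>m. \<forall>z\<in>cx Y' r m. \<exists>y\<in>cx Y r m. \<exists>d::'j \<Rightarrow> rat.
          finite {j. d j \<noteq> 0} \<and> {j. d j \<noteq> 0} \<subseteq> J
          \<and> (\<forall>j. d j \<in> cell_cx (kk j) (ss j) (ereal (ss j)) r m)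
          \<and> z = g r m y + (\<Sum>j\<in>{j. d j \<noteq> 0}. h j r m (d j)))
     \<and> (\<forall>r\<ge>0. \<forall>m. \<forall>y\<in>cx Y r m. \<forall>d::'j \<Rightarrow> rat.
          finite {j. d j \<noteq> 0} \<and> {j. d j \<noteq> 0} \<subseteq> J
          \<and> (\<forall>j. d j \<in> cell_cx (kk j) (ss j) (ereal (ss j)) r m)
          \<and> g r m y + (\<Sum>j\<in>{j. d j \<noteq> 0}. h j r m (d j)) = 0 \<longrightarrow>
          (\<exists>a::'j \<Rightarrow> rat. finite {j. a j \<noteq> 0} \<and> {j. a j \<noteq> 0} \<subseteq> J
             \<and> (\<forall>j. a j \<in> cell_cx (kk j) (ss j) (tt j) r m)
             \<and> y = (\<Sum>j\<in>{j. a j \<noteq> 0}. f j r m (a j))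
             \<and> (\<forall>j. d j = - gen_map (kk j) (ss j) r m (a j))))"

text \<open>Z with cocone c is the colimit of the chain (Y \<gamma>, G \<gamma> \<delta>) indexed by A \<subseteq> Field ord
  (computed pointwise; directed colimits of Q-vector spaces).\<close>
definition is_chain_colimit ::
  "('i \<times> 'i) set \<Rightarrow> 'i set \<Rightarrow> ('i \<Rightarrow> 'b::qvs pcx) \<Rightarrow> ('i \<Rightarrow> 'i \<Rightarrow> real \<Rightarrow> nat \<Rightarrow> 'b \<Rightarrow> 'b)
   \<Rightarrow> 'c::qvs pcx \<Rightarrow> ('i \<Rightarrow> real \<Rightarrow> nat \<Rightarrow> 'b \<Rightarrow> 'c) \<Rightarrow> bool" where
  "is_chain_colimit ord A Y G Z c \<longleftrightarrow> is_pcx Z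
     \<and> (\<forall>\<gamma>\<in>A. pcx_hom (Y \<gamma>) Z (c \<gamma>))
     \<and> (\<forall>\<gamma>\<in>A. \<forall>\<delta>\<in>A. (\<gamma>, \<delta>) \<in> ord \<longrightarrow>
          (\<forall>r\<ge>0. \<forall>m. \<forall>y\<in>cx (Y \<gamma>) r m. c \<delta> r m (G \<gamma> \<delta> r m y) = c \<gamma> r m y))
     \<and> (\<forall>r\<ge>0. \<forall>m. \<forall>z\<in>cx Z r m. z = 0 \<or> (\<exists>\<gamma>\<in>A. \<exists>y\<in>cx (Y \<gamma>) r m. z = c \<gamma> r m y))
     \<and> (\<forall>r\<ge>0. \<forall>m. \<forall>\<gamma>\<in>A. \<forall>y\<in>cx (Y \<gamma>) r m. c \<gamma> r m y = 0 \<longrightarrow>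
          (\<exists>\<delta>\<in>A. (\<gamma>, \<delta>) \<in> ord \<and> G \<gamma> \<delta> r m y = 0))"

definition wo_succ :: "('i \<times> 'i) set \<Rightarrow> 'i \<Rightarrow> 'i \<Rightarrow> bool" where
  "wo_succ ord \<beta> \<gamma> \<longleftrightarrow> (\<beta>, \<gamma>) \<in> ord \<and> \<beta> \<noteq> \<gamma>
     \<and> (\<forall>\<delta>. (\<beta>, \<delta>) \<in> ord \<and> (\<delta>, \<gamma>) \<in> ord \<longrightarrow> \<delta> = \<beta> \<or> \<delta> = \<gamma>)"

definition wo_limit :: "('i \<times> 'i) set \<Rightarrow> 'i \<Rightarrow> bool" where
  "wo_limit ord \<beta> \<longleftrightarrow> \<beta> \<in> Field ord \<and> (\<exists>\<gamma>. (\<gamma>, \<beta>) \<in> ord \<and> \<gamma> \<noteq> \<beta>)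
     \<and> \<not> (\<exists>\<alpha>. wo_succ ord \<alpha> \<beta>)"

text \<open>X is an I-cell complex: 0 \<rightarrow> X is a transfinite composite (indexed by a well-order
  ord on a set of elements of type 'i) of maps each a pushout of a direct sum of maps of I.
  The intermediate objects live in type 'b, the cells of each step are indexed by a set of
  type 'j. Since the theorem quantifies over these types, this amounts to existence of such
  a presentation.\<close>
definition Icell_complex :: "'i itself \<Rightarrow> 'b::qvs itself \<Rightarrow> 'j itself \<Rightarrow> 'a::qvs pcx \<Rightarrow> bool" where
  "Icell_complex _ _ _ X \<longleftrightarrow>
    (\<exists>(ord::('i \<times> 'i) set) (Y::'i \<Rightarrow> 'b pcx) (G::'i \<Rightarrow> 'i \<Rightarrow> real \<Rightarrow> nat \<Rightarrow> 'b \<Rightarrow> 'b)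
       (c::'i \<Rightarrow> real \<Rightarrow> nat \<Rightarrow> 'b \<Rightarrow> 'a) (J::'i \<Rightarrow> 'j set) kk ss tt f h.
      Well_order ord
      \<and> (\<forall>\<beta>\<in>Field ord. is_pcx (Y \<beta>))
      \<and> (\<forall>\<beta> \<gamma>. (\<beta>, \<gamma>) \<in> ord \<longrightarrow> pcx_hom (Y \<beta>) (Y \<gamma>) (G \<beta> \<gamma>))
      \<and> (\<forall>\<beta>\<in>Field ord. \<forall>r\<ge>0. \<forall>m. \<forall>y\<in>cx (Y \<beta>) r m. G \<beta> \<beta> r m y = y)
      \<and> (\<forall>\<beta> \<gamma> \<delta>. (\<beta>, \<gamma>) \<in> ord \<and> (\<gamma>, \<delta>) \<in> ord \<longrightarrow>
           (\<forall>r\<ge>0. \<forall>m. \<forall>y\<in>cx (Y \<beta>) r m. G \<gamma> \<delta> r m (G \<beta> \<gamma> r m y) = G \<beta> \<delta> r m y))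
      \<and> (\<forall>\<beta>\<in>Field ord. (\<forall>\<gamma>\<in>Field ord. (\<beta>, \<gamma>) \<in> ord) \<longrightarrow> (\<forall>r\<ge>0. \<forall>m. cx (Y \<beta>) r m = {0}))
      \<and> (\<forall>\<beta> \<gamma>. wo_succ ord \<beta> \<gamma> \<longrightarrow>
           cell_pushout (Y \<beta>) (Y \<gamma>) (G \<beta> \<gamma>) (J \<beta>) (kk \<beta>) (ss \<beta>) (tt \<beta>) (f \<beta>) (h \<beta>))
      \<and> (\<forall>\<beta>. wo_limit ord \<beta> \<longrightarrow>
           is_chain_colimit ord {\<gamma>. (\<gamma>, \<beta>) \<in> ord \<and> \<gamma> \<noteq> \<beta>} Y G (Y \<beta>) (\<lambda>\<gamma>. G \<gamma> \<beta>))
      \<and> is_chain_colimit ord (Field ord) Y G X c)"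

text \<open>Finite direct sum of interval modules I_[a i, b i), i < n, realised on nat \<Rightarrow> rat.\<close>
definition isum_cx :: "nat \<Rightarrow> (nat \<Rightarrow> real) \<Rightarrow> (nat \<Rightarrow> ereal) \<Rightarrow> real \<Rightarrow> (nat \<Rightarrow> rat) set" where
  "isum_cx n a b r = {v. \<forall>i. v i \<noteq> 0 \<longrightarrow> i < n \<and> a i \<le> r \<and> ereal r < b i}"

definition isum_tr :: "nat \<Rightarrow> (nat \<Rightarrow> real) \<Rightarrow> (nat \<Rightarrow> ereal) \<Rightarrow> real \<Rightarrow> real \<Rightarrow> (nat \<Rightarrow> rat) \<Rightarrow> nat \<Rightarrow> rat" where
  "isum_tr n a b r s v = (\<lambda>i. if a i \<le> s \<and> ereal s < b i then v i else 0)"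

definition fin_interval_sum :: "(real \<Rightarrow> 'a::qvs set) \<Rightarrow> (real \<Rightarrow> real \<Rightarrow> 'a \<Rightarrow> 'a) \<Rightarrow> bool" where
  "fin_interval_sum M T \<longleftrightarrow> (\<exists>n a b \<phi>. (\<forall>i<n. 0 \<le> a i \<and> ereal (a i) < b i)
     \<and> (\<forall>r\<ge>0. qlinear_on (isum_cx n a b r) (M r) (\<phi> r) \<and> bij_betw (\<phi> r) (isum_cx n a b r) (M r))
     \<and> (\<forall>r s. 0 \<le> r \<and> r \<le> s \<longrightarrow>
          (\<forall>v\<in>isum_cx n a b r. \<phi> s (isum_tr n a b r s v) = T r s (\<phi> r v))))"

text \<open>Every element lies in a submodule which is compact (= a finite direct sum of interval
  modules).\<close>
definition locally_compact_pmod :: "(real \<Rightarrow> 'a::qvs set) \<Rightarrow> (real \<Rightarrow> real \<Rightarrow> 'a \<Rightarrow> 'a) \<Rightarrow> bool" where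
  "locally_compact_pmod P T \<longleftrightarrow> (\<forall>r0\<ge>0. \<forall>x\<in>P r0. \<exists>M.
      (\<forall>r\<ge>0. qsubspace (M r) \<and> M r \<subseteq> P r)
      \<and> (\<forall>r s. 0 \<le> r \<and> r \<le> s \<longrightarrow> T r s ` M r \<subseteq> M s)
      \<and> x \<in> M r0 \<and> fin_interval_sum M T)"

end

theory Submission
  imports Defs
begin

text \<open>Say that deaths are attained in a complex if, in every positive degree, an element
  that vanishes at all times after b already vanishes at b. Attaching cells along
  S^k_[s,t) \<rightarrow> D^k_s gives a map that is injective in positive degrees and preserves attained
  deaths, since an element killed right after b already comes from the old complex. Chain
  colimits along maps injective in positive degrees preserve both properties, so by
  transfinite induction every stage of the tower, and then X, has attained deaths. There an
  element x born at r0 dies at an attained time B, and the submodule it generates is the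
  interval module I_[r0,B); hence X^k is locally compact for k > 0.\<close>

section \<open>Linear algebra over the rationals\<close>

lemma qscale_zero_left [simp]: "qscale 0 (x::'a::qvs) = 0"
  using qscale_left_distrib [of 0 0 x] by simp

lemma qscale_zero_right [simp]: "qscale a (0::'a::qvs) = 0"
  using qscale_right_distrib [of a "0::'a" 0] by simp

lemma qscale_eq_0_iff: "qscale a (x::'a::qvs) = 0 \<longleftrightarrow> a = 0 \<or> x = 0"
proof (intro iffI)
  assume ax: "qscale a x = 0"
  show "a = 0 \<or> x = 0"
  proof (cases "a = 0")
    case False
    then have "x = qscale (inverse a) (qscale a x)"
      by (simp add: qscale_assoc qscale_one)
    then show ?thesis using ax by simp
  qed simp
qed auto

lemma qscale_left_diff: "qscale (a - b) (x::'a::qvs) = qscale a x - qscale b x"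
  using qscale_left_distrib [of "a - b" b x] by (simp add: algebra_simps)

lemma qsubspace_zero: "qsubspace V \<Longrightarrow> 0 \<in> V"
  unfolding qsubspace_def by blast

lemma qsubspace_add: "qsubspace V \<Longrightarrow> x \<in> V \<Longrightarrow> y \<in> V \<Longrightarrow> x + y \<in> V"
  unfolding qsubspace_def by blast

lemma qsubspace_scale: "qsubspace V \<Longrightarrow> x \<in> V \<Longrightarrow> qscale a x \<in> V"
  unfolding qsubspace_def by blast

lemma qsubspace_sum:
  "qsubspace V \<Longrightarrow> (\<And>j. j \<in> S \<Longrightarrow> v j \<in> V) \<Longrightarrow> sum v S \<in> V"
  by (induction S rule: infinite_finite_induct) (auto intro: qsubspace_zero qsubspace_add)

lemma qlinear_on_mem: "qlinear_on V W f \<Longrightarrow> x \<in> V \<Longrightarrow> f x \<in> W"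
  unfolding qlinear_on_def by blast

lemma qlinear_on_add: "qlinear_on V W f \<Longrightarrow> x \<in> V \<Longrightarrow> y \<in> V \<Longrightarrow> f (x + y) = f x + f y"
  unfolding qlinear_on_def by blast

lemma qlinear_on_scale: "qlinear_on V W f \<Longrightarrow> x \<in> V \<Longrightarrow> f (qscale a x) = qscale a (f x)"
  unfolding qlinear_on_def by blast

lemma qlinear_on_zero: "qlinear_on V W f \<Longrightarrow> 0 \<in> V \<Longrightarrow> f 0 = 0"
  using qlinear_on_add [of V W f 0 0] by simp

lemma qlinear_on_sum:
  assumes "qlinear_on V W f" "qsubspace V" "\<And>j. j \<in> S \<Longrightarrow> v j \<in> V"
  shows "f (sum v S) = (\<Sum>j\<in>S. f (v j))"
  using assms(3)
proof (induction S rule: infinite_finite_induct)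
  case (insert j S)
  then show ?case
    using assms(1,2) by (simp add: qlinear_on_add qsubspace_sum)
qed (use qlinear_on_zero [OF assms(1) qsubspace_zero [OF assms(2)]] in auto)

definition qline :: "'a::qvs \<Rightarrow> 'a set" where
  "qline w = range (\<lambda>q. qscale q w)"

lemma qline_zero [simp]: "qline 0 = {0}"
  unfolding qline_def by auto

lemma qsubspace_qline: "qsubspace (qline w)"
  unfolding qsubspace_def qline_def
proof (intro conjI ballI allI)
  show "0 \<in> range (\<lambda>q. qscale q w)"
    using rangeI [of "\<lambda>q. qscale q w" 0] by simp
next
  fix x y assume "x \<in> range (\<lambda>q. qscale q w)" "y \<in> range (\<lambda>q. qscale q w)"
  then show "x + y \<in> range (\<lambda>q. qscale q w)"
    by (auto simp: qscale_left_distrib [symmetric])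
next
  fix a x assume "x \<in> range (\<lambda>q. qscale q w)"
  then show "qscale a x \<in> range (\<lambda>q. qscale q w)"
    by (auto simp: qscale_assoc)
qed

lemma mem_qline_self: "w \<in> qline w"
  unfolding qline_def using rangeI [of "\<lambda>q. qscale q w" 1] by (simp add: qscale_one)

lemma qline_subset: "qsubspace V \<Longrightarrow> w \<in> V \<Longrightarrow> qline w \<subseteq> V"
  unfolding qline_def by (auto intro: qsubspace_scale)

lemma qline_image:
  assumes "qlinear_on V W T" "w \<in> V"
  shows "T ` qline w = qline (T w)"
proof -
  have "(\<lambda>q. T (qscale q w)) = (\<lambda>q. qscale q (T w))"
    using qlinear_on_scale [OF assms] by simp
  then show ?thesis unfolding qline_def image_image by (rule arg_cong)
qed

lemma zero_in_qline [simp]: "0 \<in> qline w"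
  using qsubspace_zero [OF qsubspace_qline] .

lemma qlinear_on_qline_coord:
  "qlinear_on {v::nat \<Rightarrow> rat. \<forall>i. v i \<noteq> 0 \<longrightarrow> i = 0 \<and> w \<noteq> 0} (qline w) (\<lambda>v. qscale (v 0) w)"
  unfolding qlinear_on_def qline_def
  by (simp add: qscale_left_distrib qscale_assoc qscale_fun_def qscale_rat_def)

lemma bij_betw_qline_coord:
  "bij_betw (\<lambda>v. qscale (v 0) w) {v::nat \<Rightarrow> rat. \<forall>i. v i \<noteq> 0 \<longrightarrow> i = 0 \<and> w \<noteq> 0} (qline w)"
proof (cases "w = 0")
  case True
  have "{v::nat \<Rightarrow> rat. \<forall>i. v i = 0} = {0}" by auto
  with True show ?thesis by (simp add: bij_betw_def)
next
  case False
  let ?S = "{v::nat \<Rightarrow> rat. \<forall>i. v i \<noteq> 0 \<longrightarrow> i = 0}"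
  have "inj_on (\<lambda>v. qscale (v 0) w) ?S"
  proof (rule inj_onI)
    fix v v' assume "v \<in> ?S" "v' \<in> ?S" "qscale (v 0) w = qscale (v' 0) w"
    then have "v 0 = v' 0" "\<forall>i. i \<noteq> 0 \<longrightarrow> v i = 0 \<and> v' i = 0"
      using qscale_eq_0_iff [of "v 0 - v' 0" w] False by (auto simp: qscale_left_diff)
    then show "v = v'" by (metis ext)
  qed
  moreover have "qscale q w \<in> (\<lambda>v. qscale (v 0) w) ` ?S" for q
    by (rule image_eqI [where x = "\<lambda>i. if i = 0 then q else 0"]) auto
  then have "qline w \<subseteq> (\<lambda>v. qscale (v 0) w) ` ?S"
    unfolding qline_def by auto
  ultimately show ?thesis
    using False unfolding bij_betw_def qline_def by auto
qed

section \<open>Persistence modules and complexes\<close>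

lemma is_pmod_subspace: "is_pmod P T \<Longrightarrow> 0 \<le> r \<Longrightarrow> qsubspace (P r)"
  unfolding is_pmod_def by blast

lemma is_pmod_linear: "is_pmod P T \<Longrightarrow> 0 \<le> r \<Longrightarrow> r \<le> s \<Longrightarrow> qlinear_on (P r) (P s) (T r s)"
  unfolding is_pmod_def by blast

lemma is_pmod_id: "is_pmod P T \<Longrightarrow> 0 \<le> r \<Longrightarrow> x \<in> P r \<Longrightarrow> T r r x = x"
  unfolding is_pmod_def by blast

lemma is_pmod_comp:
  "is_pmod P T \<Longrightarrow> 0 \<le> r \<Longrightarrow> r \<le> s \<Longrightarrow> s \<le> u \<Longrightarrow> x \<in> P r \<Longrightarrow> T s u (T r s x) = T r u x"
  unfolding is_pmod_def by blast

lemma is_pmod_mem: "is_pmod P T \<Longrightarrow> 0 \<le> r \<Longrightarrow> r \<le> s \<Longrightarrow> x \<in> P r \<Longrightarrow> T r s x \<in> P s"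
  using is_pmod_linear qlinear_on_mem by metis

lemma is_pmod_tr_zero: "is_pmod P T \<Longrightarrow> 0 \<le> r \<Longrightarrow> r \<le> s \<Longrightarrow> T r s 0 = 0"
  using is_pmod_linear is_pmod_subspace qlinear_on_zero qsubspace_zero by metis

lemma is_pcx_pmod: "is_pcx X \<Longrightarrow> is_pmod (\<lambda>r. cx X r k) (\<lambda>r s. tr X r s k)"
  unfolding is_pcx_def by blast

lemma is_pcx_subspace: "is_pcx X \<Longrightarrow> 0 \<le> r \<Longrightarrow> qsubspace (cx X r k)"
  using is_pcx_pmod is_pmod_subspace by fast

lemma is_pcx_zero: "is_pcx X \<Longrightarrow> 0 \<le> r \<Longrightarrow> 0 \<in> cx X r k"
  using is_pcx_subspace qsubspace_zero by blast

lemma is_pcx_linear: "is_pcx X \<Longrightarrow> 0 \<le> r \<Longrightarrow> r \<le> s \<Longrightarrow> qlinear_on (cx X r k) (cx X s k) (tr X r s k)"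
  using is_pcx_pmod is_pmod_linear by fast

lemma is_pcx_mem: "is_pcx X \<Longrightarrow> 0 \<le> r \<Longrightarrow> r \<le> s \<Longrightarrow> x \<in> cx X r k \<Longrightarrow> tr X r s k x \<in> cx X s k"
  using is_pcx_pmod is_pmod_mem by fast

lemma pcx_hom_linear: "pcx_hom X Y f \<Longrightarrow> 0 \<le> r \<Longrightarrow> qlinear_on (cx X r k) (cx Y r k) (f r k)"
  unfolding pcx_hom_def by blast

lemma pcx_hom_mem: "pcx_hom X Y f \<Longrightarrow> 0 \<le> r \<Longrightarrow> x \<in> cx X r k \<Longrightarrow> f r k x \<in> cx Y r k"
  using pcx_hom_linear qlinear_on_mem by metis

lemma pcx_hom_tr:
  "pcx_hom X Y f \<Longrightarrow> 0 \<le> r \<Longrightarrow> r \<le> s \<Longrightarrow> x \<in> cx X r k \<Longrightarrow> f s k (tr X r s k x) = tr Y r s k (f r k x)"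
  unfolding pcx_hom_def by blast

lemma pcx_hom_zero: "pcx_hom X Y f \<Longrightarrow> is_pcx X \<Longrightarrow> 0 \<le> r \<Longrightarrow> f r k 0 = 0"
  using pcx_hom_linear is_pcx_zero qlinear_on_zero by metis

text \<open>With attained deaths every bar is open on the right, as in the intervals [a, b).\<close>
definition death_attained :: "(real \<Rightarrow> 'a::qvs set) \<Rightarrow> (real \<Rightarrow> real \<Rightarrow> 'a \<Rightarrow> 'a) \<Rightarrow> bool" where
  "death_attained P T \<longleftrightarrow> (\<forall>b\<ge>0. \<forall>y\<in>P b. (\<forall>r>b. T b r y = 0) \<longrightarrow> y = 0)"

definition pos_death_attained :: "'a::qvs pcx \<Rightarrow> bool" where
  "pos_death_attained X \<longleftrightarrow> (\<forall>m>0. death_attained (\<lambda>r. cx X r m) (\<lambda>r s. tr X r s m))"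

definition pos_injective :: "'a::qvs pcx \<Rightarrow> (real \<Rightarrow> nat \<Rightarrow> 'a \<Rightarrow> 'c::qvs) \<Rightarrow> bool" where
  "pos_injective X g \<longleftrightarrow> (\<forall>r\<ge>0. \<forall>m>0. \<forall>y\<in>cx X r m. g r m y = 0 \<longrightarrow> y = 0)"

lemma death_attainedD:
  "death_attained P T \<Longrightarrow> 0 \<le> b \<Longrightarrow> y \<in> P b \<Longrightarrow> (\<And>r. b < r \<Longrightarrow> T b r y = 0) \<Longrightarrow> y = 0"
  unfolding death_attained_def by blast

lemma pos_death_attainedI:
  assumes "\<And>m b y. 0 < m \<Longrightarrow> 0 \<le> b \<Longrightarrow> y \<in> cx X b m \<Longrightarrow> (\<And>r. b < r \<Longrightarrow> tr X b r m y = 0) \<Longrightarrow> y = 0"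
  shows "pos_death_attained X"
  unfolding pos_death_attained_def death_attained_def using assms by blast

lemma pos_death_attainedD:
  "pos_death_attained X \<Longrightarrow> 0 < m \<Longrightarrow> 0 \<le> b \<Longrightarrow> y \<in> cx X b m \<Longrightarrow>
    (\<And>r. b < r \<Longrightarrow> tr X b r m y = 0) \<Longrightarrow> y = 0"
  unfolding pos_death_attained_def death_attained_def by blast

lemma pos_injectiveI:
  "(\<And>r m y. 0 \<le> r \<Longrightarrow> 0 < m \<Longrightarrow> y \<in> cx X r m \<Longrightarrow> g r m y = 0 \<Longrightarrow> y = 0) \<Longrightarrow> pos_injective X g"
  unfolding pos_injective_def by blast

lemma pos_injectiveD:
  "pos_injective X g \<Longrightarrow> 0 \<le> r \<Longrightarrow> 0 < m \<Longrightarrow> y \<in> cx X r m \<Longrightarrow> g r m y = 0 \<Longrightarrow> y = 0"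
  unfolding pos_injective_def by blast

lemma pos_injective_comp:
  assumes "pos_injective X g" "pos_injective Y g'" "pcx_hom X Y g"
    and "\<And>r m y. 0 \<le> r \<Longrightarrow> y \<in> cx X r m \<Longrightarrow> g'' r m y = g' r m (g r m y)"
  shows "pos_injective X g''"
  using assms by (auto intro!: pos_injectiveI dest: pos_injectiveD pcx_hom_mem)

section \<open>Interval submodules\<close>

text \<open>One summand I_[a,b), or none when the interval is empty (fin_interval_sum only admits
  nonempty intervals).\<close>
lemma isum_cx_single:
  "isum_cx (if ereal a < b then 1 else 0) (\<lambda>_. a) (\<lambda>_. b) r
     = {v. \<forall>i. v i \<noteq> 0 \<longrightarrow> i = 0 \<and> a \<le> r \<and> ereal r < b}"
proof (cases "ereal a < b")
  case False
  then have "\<not> (a \<le> r \<and> ereal r < b)"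
    using order_le_less_trans [of "ereal a" "ereal r" b] by auto
  then show ?thesis using False unfolding isum_cx_def by auto
qed (auto simp: isum_cx_def)

lemma fin_interval_sum_qline:
  assumes pm: "is_pmod P T" and a: "0 \<le> a"
    and w: "\<And>r. 0 \<le> r \<Longrightarrow> w r \<in> P r"
    and alive: "\<And>r. 0 \<le> r \<Longrightarrow> w r \<noteq> 0 \<longleftrightarrow> a \<le> r \<and> ereal r < b"
    and w_tr: "\<And>r s. a \<le> r \<Longrightarrow> r \<le> s \<Longrightarrow> T r s (w r) = w s"
  shows "fin_interval_sum (\<lambda>r. qline (w r)) T"
  unfolding fin_interval_sum_def
proof (rule exI, rule exI, rule exI, rule exI, intro conjI)
  let ?n = "if ereal a < b then 1 else 0 :: nat"
  have cx: "isum_cx ?n (\<lambda>_. a) (\<lambda>_. b) r = {v. \<forall>i. v i \<noteq> 0 \<longrightarrow> i = 0 \<and> w r \<noteq> 0}"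
    if "0 \<le> r" for r
    using isum_cx_single alive [OF that] by simp
  show "\<forall>i<?n. 0 \<le> a \<and> ereal a < b" using a by simp
  show "\<forall>r\<ge>0. qlinear_on (isum_cx ?n (\<lambda>_. a) (\<lambda>_. b) r) (qline (w r)) (\<lambda>v. qscale (v 0) (w r))
    \<and> bij_betw (\<lambda>v. qscale (v 0) (w r)) (isum_cx ?n (\<lambda>_. a) (\<lambda>_. b) r) (qline (w r))"
  proof (intro allI impI)
    fix r :: real assume "0 \<le> r"
    show "qlinear_on (isum_cx ?n (\<lambda>_. a) (\<lambda>_. b) r) (qline (w r)) (\<lambda>v. qscale (v 0) (w r))
      \<and> bij_betw (\<lambda>v. qscale (v 0) (w r)) (isum_cx ?n (\<lambda>_. a) (\<lambda>_. b) r) (qline (w r))"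
      unfolding cx [OF \<open>0 \<le> r\<close>] by (rule conjI qlinear_on_qline_coord bij_betw_qline_coord)+
  qed
  show "\<forall>r s. 0 \<le> r \<and> r \<le> s \<longrightarrow> (\<forall>v\<in>isum_cx ?n (\<lambda>_. a) (\<lambda>_. b) r.
      qscale (isum_tr ?n (\<lambda>_. a) (\<lambda>_. b) r s v 0) (w s) = T r s (qscale (v 0) (w r)))"
  proof (intro allI impI ballI, elim conjE)
    fix r s v assume r: "0 \<le> r" and rs: "r \<le> s" and v: "v \<in> isum_cx ?n (\<lambda>_. a) (\<lambda>_. b) r"
    show "qscale (isum_tr ?n (\<lambda>_. a) (\<lambda>_. b) r s v 0) (w s) = T r s (qscale (v 0) (w r))"
    proof (cases "v 0 = 0")
      case True
      then show ?thesis
        using is_pmod_tr_zero [OF pm r rs] by (simp add: isum_tr_def)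
    next
      case False
      then have "a \<le> r" using v cx [OF r] alive [OF r] by auto
      then have "T r s (qscale (v 0) (w r)) = qscale (v 0) (w s)"
        using qlinear_on_scale [OF is_pmod_linear [OF pm r rs] w [OF r]] w_tr rs by simp
      moreover have "w s = 0" if "\<not> (a \<le> s \<and> ereal s < b)"
        using alive [of s] that r rs by auto
      ultimately show ?thesis by (auto simp: isum_tr_def)
    qed
  qed
qed

text \<open>The vanishing times of x form an up-set of [r0, \<infinity>); by death_attained it contains its
  infimum, so it is [B, \<infinity>) or empty (B = \<infinity>).\<close>
lemma death_time_exists:
  assumes pm: "is_pmod P T" and death: "death_attained P T" and r0: "0 \<le> r0" and x: "x \<in> P r0"
  obtains B where "\<And>r. r0 \<le> r \<Longrightarrow> T r0 r x \<noteq> 0 \<longleftrightarrow> ereal r < B"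
proof -
  define K where "K = {r. r0 \<le> r \<and> T r0 r x = 0}"
  have up: "r' \<in> K" if "r \<in> K" "r \<le> r'" for r r'
  proof -
    from that have r: "r0 \<le> r" "T r0 r x = 0" by (auto simp: K_def)
    then have "T r0 r' x = T r r' 0" using is_pmod_comp [OF pm r0 r(1) that(2) x] by simp
    also have "\<dots> = 0" using is_pmod_tr_zero [OF pm _ that(2)] r0 r(1) by simp
    finally show ?thesis using r(1) that(2) by (simp add: K_def)
  qed
  show ?thesis
  proof (cases "K = {}")
    case True
    then show ?thesis by (intro that [of PInfty]) (auto simp: K_def)
  next
    case False
    define B where "B = Inf K"
    have bdd: "bdd_below K" unfolding bdd_below_def K_def by auto
    have r0B: "r0 \<le> B" unfolding B_def using False by (intro cInf_greatest) (auto simp: K_def)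
    have above: "r \<in> K" if Br: "B < r" for r
    proof -
      obtain k where "k \<in> K" "k < r" using cInf_lessD [OF False, of r] Br unfolding B_def by blast
      then show ?thesis using up by simp
    qed
    have "T B r (T r0 B x) = 0" if "B < r" for r
      using is_pmod_comp [OF pm r0 r0B _ x, of r] above [OF that] that by (simp add: K_def)
    then have "T r0 B x = 0"
      using death_attainedD [OF death _ is_pmod_mem [OF pm r0 r0B x]] r0 r0B by simp
    then have "B \<in> K" using r0B by (simp add: K_def)
    then have K: "r \<in> K \<longleftrightarrow> B \<le> r" for r
      using cInf_lower [OF _ bdd, of r] up unfolding B_def by blast
    show ?thesis
    proof (rule that [of "ereal B"])
      fix r assume "r0 \<le> r"
      then show "T r0 r x \<noteq> 0 \<longleftrightarrow> ereal r < ereal B"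
        using K [of r] unfolding K_def by auto
    qed
  qed
qed

text \<open>The submodule generated by x is an interval module [r0, B).\<close>
lemma locally_compact_if_death_attained:
  assumes pm: "is_pmod P T" and death: "death_attained P T"
  shows "locally_compact_pmod P T"
  unfolding locally_compact_pmod_def
proof (intro allI impI ballI)
  fix r0 x assume r0: "0 \<le> r0" and x: "x \<in> P r0"
  obtain B where B: "\<And>r. r0 \<le> r \<Longrightarrow> T r0 r x \<noteq> 0 \<longleftrightarrow> ereal r < B"
    using death_time_exists [OF pm death r0 x] by blast
  define w where "w r = (if r0 \<le> r then T r0 r x else 0)" for r
  have w: "w r \<in> P r" if "0 \<le> r" for r
    using is_pmod_mem [OF pm r0 _ x] qsubspace_zero [OF is_pmod_subspace [OF pm that]]
    by (simp add: w_def)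
  have w_tr: "T r s (w r) = w s" if "r0 \<le> r" "r \<le> s" for r s
    using is_pmod_comp [OF pm r0 that x] that by (simp add: w_def)
  have sub: "qsubspace (qline (w r)) \<and> qline (w r) \<subseteq> P r" if "0 \<le> r" for r
    using qsubspace_qline qline_subset [OF is_pmod_subspace [OF pm that] w [OF that]] by blast
  have mono: "T r s ` qline (w r) \<subseteq> qline (w s)" if rs: "0 \<le> r" "r \<le> s" for r s
    using qline_image [OF is_pmod_linear [OF pm rs] w [OF rs(1)]] w_tr [OF _ rs(2)]
      is_pmod_tr_zero [OF pm rs]
    by (cases "r0 \<le> r") (simp_all add: w_def)
  have x_in: "x \<in> qline (w r0)"
    using mem_qline_self is_pmod_id [OF pm r0 x] by (simp add: w_def)
  have interval: "fin_interval_sum (\<lambda>r. qline (w r)) T"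
  proof (rule fin_interval_sum_qline [OF pm r0 w _ w_tr])
    fix r :: real assume "0 \<le> r"
    show "w r \<noteq> 0 \<longleftrightarrow> r0 \<le> r \<and> ereal r < B"
      using B [of r] by (simp add: w_def)
  qed
  show "\<exists>M. (\<forall>r\<ge>0. qsubspace (M r) \<and> M r \<subseteq> P r)
      \<and> (\<forall>r s. 0 \<le> r \<and> r \<le> s \<longrightarrow> T r s ` M r \<subseteq> M s) \<and> x \<in> M r0 \<and> fin_interval_sum M T"
  proof (intro exI [of _ "\<lambda>r. qline (w r)"] conjI)
    show "\<forall>r\<ge>0. qsubspace (qline (w r)) \<and> qline (w r) \<subseteq> P r" using sub by blast
    show "\<forall>r s. 0 \<le> r \<and> r \<le> s \<longrightarrow> T r s ` qline (w r) \<subseteq> qline (w s)" using mono by blast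
  qed (fact x_in interval)+
qed

section \<open>Cells and cell attachments\<close>

lemma cell_cx_eq_UNIV_iff:
  "cell_cx k s t r m = UNIV \<longleftrightarrow>
     (s \<le> r \<and> ereal r < t \<and> m = k) \<or> (s \<le> r \<and> t \<le> ereal r \<and> 1 \<le> k \<and> (m = k - 1 \<or> m = k))"
proof -
  have "{0::rat} \<noteq> UNIV" by (metis UNIV_I singletonD zero_neq_one)
  then show ?thesis unfolding cell_cx_def by auto
qed

lemma disk_cx_eq_UNIV_iff:
  "cell_cx k s (ereal s) r m = UNIV \<longleftrightarrow> s \<le> r \<and> 1 \<le> k \<and> (m = k - 1 \<or> m = k)"
  by (auto simp: cell_cx_eq_UNIV_iff)

lemma cell_cx_nonzero: "x \<in> cell_cx k s t r m \<Longrightarrow> x \<noteq> 0 \<Longrightarrow> cell_cx k s t r m = UNIV"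
  unfolding cell_cx_def by (auto split: if_splits)

lemma zero_in_cell_cx [simp]: "0 \<in> cell_cx k s t r m"
  unfolding cell_cx_def by auto

lemma cx_cell [simp]: "cx (cell k s t) = cell_cx k s t"
  unfolding cell_def by simp

lemma tr_cell [simp]: "tr (cell k s t) r r' m x = (if cell_cx k s t r' m = UNIV then x else 0)"
  unfolding cell_def by simp

lemma tr_disk:
  assumes "x \<in> cell_cx k s (ereal s) r m" "r \<le> r'"
  shows "tr (Dsk k s) r r' m x = x"
proof (cases "x = 0")
  case False
  then show ?thesis
    using cell_cx_nonzero [OF assms(1)] assms(2) by (auto simp: disk_cx_eq_UNIV_iff)
qed simp

lemma disk_cx_mono:
  assumes "x \<in> cell_cx k s (ereal s) b m" "b \<le> r"
  shows "x \<in> cell_cx k s (ereal s) r m"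
proof (cases "x = 0")
  case False
  then have "cell_cx k s (ereal s) r m = UNIV"
    using cell_cx_nonzero [OF assms(1)] assms(2) by (simp add: disk_cx_eq_UNIV_iff)
  then show ?thesis by simp
qed simp

lemma gen_map_zero [simp]: "gen_map k s r m 0 = 0"
  unfolding gen_map_def by simp

lemma gen_map_disk: "x \<in> cell_cx k s (ereal s) r m \<Longrightarrow> gen_map k s r m x = x"
  using cell_cx_nonzero [of x k s "ereal s" r m] by (cases "x = 0") (simp_all add: gen_map_def)

lemma gen_map_pos_degree: "0 < m \<Longrightarrow> x \<in> cell_cx k s t r m \<Longrightarrow> gen_map k s r m x = x"
  using cell_cx_nonzero [of x k s t r m]
  by (cases "x = 0") (auto simp: gen_map_def cell_cx_eq_UNIV_iff disk_cx_eq_UNIV_iff)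

text \<open>In degree k - 1 the sphere S^k_[s,t) is nonzero only from time t on, so the hypothesis
  forces t \<le> b.\<close>
lemma disk_elem_in_sphere:
  assumes d: "d \<in> cell_cx k s (ereal s) b m" "d \<noteq> 0"
    and later: "\<And>r. b < r \<Longrightarrow> cell_cx k s t r m = UNIV"
  shows "d \<in> cell_cx k s t b m"
proof -
  have born: "s \<le> b" "1 \<le> k" "m = k - 1 \<or> m = k"
    using cell_cx_nonzero [OF d] by (simp_all add: disk_cx_eq_UNIV_iff)
  show ?thesis
  proof (cases "m = k")
    case True
    then have "cell_cx k s t b m = UNIV"
      using born by (cases "ereal b < t") (simp_all add: cell_cx_eq_UNIV_iff)
    then show ?thesis by simp
  next
    case False
    have after: "t \<le> ereal r" if "ereal b < ereal r" for r
      using later [of r] that False unfolding cell_cx_eq_UNIV_iff by auto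
    have "t \<le> ereal b"
    proof (rule dense_ge)
      fix y assume "ereal b < y"
      with after show "t \<le> y" by (cases y) auto
    qed
    then have "cell_cx k s t b m = UNIV"
      using born by (simp add: cell_cx_eq_UNIV_iff)
    then show ?thesis by simp
  qed
qed

lemma cell_pushout_homs:
  assumes "cell_pushout Y Y' g J kk ss tt f h"
  shows "pcx_hom Y Y' g"
    and "j \<in> J \<Longrightarrow> pcx_hom (Sph (kk j) (ss j) (tt j)) Y (f j)"
    and "j \<in> J \<Longrightarrow> pcx_hom (Dsk (kk j) (ss j)) Y' (h j)"
  using assms unfolding cell_pushout_def by blast+

lemma cell_pushout_commutes:
  assumes "cell_pushout Y Y' g J kk ss tt f h" "j \<in> J" "0 \<le> r" "x \<in> cell_cx (kk j) (ss j) (tt j) r m"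
  shows "g r m (f j r m x) = h j r m (gen_map (kk j) (ss j) r m x)"
  using assms unfolding cell_pushout_def by blast

lemma cell_pushout_surj:
  assumes "cell_pushout Y Y' g J kk ss tt f h" "0 \<le> r" "z \<in> cx Y' r m"
  obtains y d where "y \<in> cx Y r m" "finite {j. d j \<noteq> 0}" "{j. d j \<noteq> 0} \<subseteq> J"
    "\<And>j. d j \<in> cell_cx (kk j) (ss j) (ereal (ss j)) r m"
    "z = g r m y + (\<Sum>j\<in>{j. d j \<noteq> 0}. h j r m (d j))"
proof -
  have "\<exists>y\<in>cx Y r m. \<exists>d. finite {j. d j \<noteq> 0} \<and> {j. d j \<noteq> 0} \<subseteq> J
      \<and> (\<forall>j. d j \<in> cell_cx (kk j) (ss j) (ereal (ss j)) r m)
      \<and> z = g r m y + (\<Sum>j\<in>{j. d j \<noteq> 0}. h j r m (d j))"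
    using assms unfolding cell_pushout_def by blast
  then show ?thesis using that by blast
qed

lemma cell_pushout_ker:
  assumes "cell_pushout Y Y' g J kk ss tt f h" "0 \<le> r" "y \<in> cx Y r m"
    and "finite {j. d j \<noteq> 0}" "{j. d j \<noteq> 0} \<subseteq> J"
    and "\<And>j. d j \<in> cell_cx (kk j) (ss j) (ereal (ss j)) r m"
    and "g r m y + (\<Sum>j\<in>{j. d j \<noteq> 0}. h j r m (d j)) = 0"
  obtains a where "\<And>j. a j \<in> cell_cx (kk j) (ss j) (tt j) r m"
    "y = (\<Sum>j\<in>{j. a j \<noteq> 0}. f j r m (a j))"
    "\<And>j. d j = - gen_map (kk j) (ss j) r m (a j)"
proof -
  have "\<exists>a. (\<forall>j. a j \<in> cell_cx (kk j) (ss j) (tt j) r m)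
      \<and> y = (\<Sum>j\<in>{j. a j \<noteq> 0}. f j r m (a j)) \<and> (\<forall>j. d j = - gen_map (kk j) (ss j) r m (a j))"
    using assms unfolding cell_pushout_def by blast
  then show ?thesis using that by blast
qed

text \<open>This is where positive degrees are needed: S^0_[s,t) \<rightarrow> D^0 = 0 is not injective.\<close>
lemma cell_pushout_pos_injective:
  assumes P: "cell_pushout Y Y' g J kk ss tt f h"
  shows "pos_injective Y g"
proof (rule pos_injectiveI)
  fix r m y assume r: "0 \<le> r" and m: "0 < m" and y: "y \<in> cx Y r m" and gy: "g r m y = 0"
  obtain a where a: "\<And>j. a j \<in> cell_cx (kk j) (ss j) (tt j) r m"
    "y = (\<Sum>j\<in>{j. a j \<noteq> 0}. f j r m (a j))" "\<And>j. 0 = - gen_map (kk j) (ss j) r m (a j)"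
    using cell_pushout_ker [OF P r y, of "\<lambda>_. 0"] gy by auto
  have "a j = 0" for j
    using a(3) [of j] gen_map_pos_degree [OF m a(1)] by simp
  then show "y = 0" using a(2) by simp
qed

lemma cell_pushout_tr:
  assumes P: "cell_pushout Y Y' g J kk ss tt f h" and Y': "is_pcx Y'"
    and br: "0 \<le> b" "b \<le> r" and y: "y \<in> cx Y b m" and D: "D \<subseteq> J"
    and d: "\<And>j. d j \<in> cell_cx (kk j) (ss j) (ereal (ss j)) b m"
  shows "tr Y' b r m (g b m y + (\<Sum>j\<in>D. h j b m (d j)))
    = g r m (tr Y b r m y) + (\<Sum>j\<in>D. h j r m (d j))"
proof -
  have lin: "qlinear_on (cx Y' b m) (cx Y' r m) (tr Y' b r m)"
    using is_pcx_linear [OF Y' br] .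
  have sub: "qsubspace (cx Y' b m)"
    using is_pcx_subspace [OF Y' br(1)] .
  have g: "pcx_hom Y Y' g" and h: "\<And>j. j \<in> D \<Longrightarrow> pcx_hom (Dsk (kk j) (ss j)) Y' (h j)"
    using cell_pushout_homs [OF P] D by auto
  have hD: "h j b m (d j) \<in> cx Y' b m" if "j \<in> D" for j
    using pcx_hom_mem [OF h [OF that] br(1)] d by simp
  have "(\<Sum>j\<in>D. h j b m (d j)) \<in> cx Y' b m"
    by (rule qsubspace_sum [OF sub hD])
  then have "tr Y' b r m (g b m y + (\<Sum>j\<in>D. h j b m (d j)))
      = tr Y' b r m (g b m y) + (\<Sum>j\<in>D. tr Y' b r m (h j b m (d j)))"
    using qlinear_on_add [OF lin pcx_hom_mem [OF g br(1) y]]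
      qlinear_on_sum [OF lin sub, of D "\<lambda>j. h j b m (d j)"] hD
    by simp
  also have "\<dots> = g r m (tr Y b r m y) + (\<Sum>j\<in>D. h j r m (d j))"
  proof -
    have "tr Y' b r m (h j b m (d j)) = h j r m (d j)" if "j \<in> D" for j
      using pcx_hom_tr [OF h [OF that] br d [of j, folded cx_cell], symmetric]
        tr_disk [OF d br(2)]
      by (simp del: tr_cell)
    then show ?thesis
      using pcx_hom_tr [OF g br y] by simp
  qed
  finally show ?thesis .
qed

text \<open>Write z = g y + \<Sigma> h_j d_j. Since z dies right after b, at each later time r the disk
  coefficients d_j come from nonzero sphere elements, so each d_j already lies in the sphere at
  time b and h_j d_j = g (f_j d_j).\<close>
lemma cell_pushout_killed_in_range:
  assumes P: "cell_pushout Y Y' g J kk ss tt f h" and Y: "is_pcx Y" and Y': "is_pcx Y'"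
    and b: "0 \<le> b" and z: "z \<in> cx Y' b m" and killed: "\<And>r. b < r \<Longrightarrow> tr Y' b r m z = 0"
  shows "\<exists>y\<in>cx Y b m. z = g b m y"
proof -
  obtain y d where y: "y \<in> cx Y b m" and fin: "finite {j. d j \<noteq> 0}" and DJ: "{j. d j \<noteq> 0} \<subseteq> J"
    and d: "\<And>j. d j \<in> cell_cx (kk j) (ss j) (ereal (ss j)) b m"
    and zyd: "z = g b m y + (\<Sum>j\<in>{j. d j \<noteq> 0}. h j b m (d j))"
    using cell_pushout_surj [OF P b z] by blast
  define D where "D = {j. d j \<noteq> 0}"
  have sphere: "d j \<in> cell_cx (kk j) (ss j) (tt j) b m" if j: "j \<in> D" for j
  proof (rule disk_elem_in_sphere [OF d])
    show "d j \<noteq> 0" using j by (simp add: D_def)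
    fix r assume br: "b < r"
    then have r: "0 \<le> r" "b \<le> r" using b by auto
    have "g r m (tr Y b r m y) + (\<Sum>j\<in>{j. d j \<noteq> 0}. h j r m (d j)) = 0"
      using cell_pushout_tr [OF P Y' b r(2) y DJ d] killed [OF br] zyd by simp
    then obtain a where a: "\<And>j. a j \<in> cell_cx (kk j) (ss j) (tt j) r m"
        and da: "\<And>j. d j = - gen_map (kk j) (ss j) r m (a j)"
      using cell_pushout_ker [OF P r(1) is_pcx_mem [OF Y b r(2) y] fin DJ disk_cx_mono [OF d r(2)]]
      by blast
    have "a j \<noteq> 0" using da [of j] \<open>d j \<noteq> 0\<close> by auto
    then show "cell_cx (kk j) (ss j) (tt j) r m = UNIV"
      using cell_cx_nonzero [OF a] by blast
  qed
  have g: "pcx_hom Y Y' g" and f: "\<And>j. j \<in> D \<Longrightarrow> pcx_hom (Sph (kk j) (ss j) (tt j)) Y (f j)"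
    using cell_pushout_homs [OF P] DJ by (auto simp: D_def)
  have fD: "f j b m (d j) \<in> cx Y b m" if "j \<in> D" for j
    using pcx_hom_mem [OF f [OF that] b] sphere [OF that] by simp
  have fsum: "(\<Sum>j\<in>D. f j b m (d j)) \<in> cx Y b m"
    by (rule qsubspace_sum [OF is_pcx_subspace [OF Y b] fD])
  have "h j b m (d j) = g b m (f j b m (d j))" if "j \<in> D" for j
    using cell_pushout_commutes [OF P _ b sphere [OF that]] gen_map_disk [OF d] that DJ
    by (auto simp: D_def)
  then have "z = g b m (y + (\<Sum>j\<in>D. f j b m (d j)))"
    using zyd qlinear_on_add [OF pcx_hom_linear [OF g b] y fsum]
      qlinear_on_sum [OF pcx_hom_linear [OF g b] is_pcx_subspace [OF Y b], of D "\<lambda>j. f j b m (d j)"] fD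
    by (simp add: D_def)
  moreover have "y + (\<Sum>j\<in>D. f j b m (d j)) \<in> cx Y b m"
    using qsubspace_add [OF is_pcx_subspace [OF Y b] y fsum] .
  ultimately show ?thesis by blast
qed

lemma cell_pushout_pos_death_attained:
  assumes P: "cell_pushout Y Y' g J kk ss tt f h" and Y: "is_pcx Y" and Y': "is_pcx Y'"
    and death: "pos_death_attained Y"
  shows "pos_death_attained Y'"
proof (rule pos_death_attainedI)
  fix m b z assume m: "0 < m" and b: "0 \<le> b" and z: "z \<in> cx Y' b m"
    and killed: "\<And>r. b < r \<Longrightarrow> tr Y' b r m z = 0"
  obtain y where y: "y \<in> cx Y b m" and zy: "z = g b m y"
    using cell_pushout_killed_in_range [OF P Y Y' b z killed] by blast
  have g: "pcx_hom Y Y' g" using cell_pushout_homs(1) [OF P] .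
  have "tr Y b r m y = 0" if br: "b < r" for r
  proof (rule pos_injectiveD [OF cell_pushout_pos_injective [OF P] _ m])
    show "0 \<le> r" "tr Y b r m y \<in> cx Y r m" using br b is_pcx_mem [OF Y b _ y] by auto
    show "g r m (tr Y b r m y) = 0"
      using pcx_hom_tr [OF g b _ y, of r] killed [OF br] br zy by simp
  qed
  then have "y = 0" using pos_death_attainedD [OF death m b y] by blast
  then show "z = 0" using zy pcx_hom_zero [OF g Y b] by simp
qed

section \<open>Colimits of chains\<close>

lemma chain_colimit_pcx: "is_chain_colimit ord A Y G Z c \<Longrightarrow> is_pcx Z"
  unfolding is_chain_colimit_def by blast

lemma chain_colimit_homs:
  "is_chain_colimit ord A Y G Z c \<Longrightarrow> \<gamma> \<in> A \<Longrightarrow> pcx_hom (Y \<gamma>) Z (c \<gamma>)"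
  unfolding is_chain_colimit_def by blast

lemma chain_colimit_surj:
  assumes "is_chain_colimit ord A Y G Z c" "0 \<le> r" "z \<in> cx Z r m" "z \<noteq> 0"
  obtains \<gamma> y where "\<gamma> \<in> A" "y \<in> cx (Y \<gamma>) r m" "z = c \<gamma> r m y"
  using assms unfolding is_chain_colimit_def by blast

lemma chain_colimit_ker:
  assumes "is_chain_colimit ord A Y G Z c" "0 \<le> r" "\<gamma> \<in> A" "y \<in> cx (Y \<gamma>) r m" "c \<gamma> r m y = 0"
  obtains \<delta> where "\<delta> \<in> A" "(\<gamma>, \<delta>) \<in> ord" "G \<gamma> \<delta> r m y = 0"
  using assms unfolding is_chain_colimit_def by blast

lemma chain_colimit_pos_injective:
  assumes C: "is_chain_colimit ord A Y G Z c" and \<gamma>: "\<gamma> \<in> A"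
    and inj: "\<And>\<delta>. \<delta> \<in> A \<Longrightarrow> (\<gamma>, \<delta>) \<in> ord \<Longrightarrow> pos_injective (Y \<gamma>) (G \<gamma> \<delta>)"
  shows "pos_injective (Y \<gamma>) (c \<gamma>)"
proof (rule pos_injectiveI)
  fix r m y assume "0 \<le> r" "0 < m" "y \<in> cx (Y \<gamma>) r m" "c \<gamma> r m y = 0"
  then show "y = 0"
    using chain_colimit_ker [OF C _ \<gamma>] inj pos_injectiveD by metis
qed

lemma chain_colimit_pos_death_attained:
  assumes C: "is_chain_colimit ord A Y G Z c" and Y: "\<And>\<gamma>. \<gamma> \<in> A \<Longrightarrow> is_pcx (Y \<gamma>)"
    and death: "\<And>\<gamma>. \<gamma> \<in> A \<Longrightarrow> pos_death_attained (Y \<gamma>)"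
    and inj: "\<And>\<gamma> \<delta>. \<gamma> \<in> A \<Longrightarrow> \<delta> \<in> A \<Longrightarrow> (\<gamma>, \<delta>) \<in> ord \<Longrightarrow> pos_injective (Y \<gamma>) (G \<gamma> \<delta>)"
  shows "pos_death_attained Z"
proof (rule pos_death_attainedI)
  fix m b z assume m: "0 < m" and b: "0 \<le> b" and z: "z \<in> cx Z b m"
    and killed: "\<And>r. b < r \<Longrightarrow> tr Z b r m z = 0"
  show "z = 0"
  proof (rule ccontr)
    assume "z \<noteq> 0"
    then obtain \<gamma> y where \<gamma>: "\<gamma> \<in> A" and y: "y \<in> cx (Y \<gamma>) b m" and zy: "z = c \<gamma> b m y"
      using chain_colimit_surj [OF C b z] by blast
    have c: "pcx_hom (Y \<gamma>) Z (c \<gamma>)" using chain_colimit_homs [OF C \<gamma>] .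
    have "tr (Y \<gamma>) b r m y = 0" if br: "b < r" for r
    proof (rule pos_injectiveD [OF chain_colimit_pos_injective [OF C \<gamma> inj [OF \<gamma>]] _ m])
      show "0 \<le> r" "tr (Y \<gamma>) b r m y \<in> cx (Y \<gamma>) r m"
        using br b is_pcx_mem [OF Y [OF \<gamma>] b _ y] by auto
      show "c \<gamma> r m (tr (Y \<gamma>) b r m y) = 0"
        using pcx_hom_tr [OF c b _ y, of r] killed [OF br] br zy by simp
    qed
    then have "y = 0" using pos_death_attainedD [OF death [OF \<gamma>] m b y] by blast
    then show False using zy pcx_hom_zero [OF c Y [OF \<gamma>] b] \<open>z \<noteq> 0\<close> by simp
  qed
qed

section \<open>Towers of cell attachments\<close>

lemma wo_succ_pred:
  assumes "Well_order ord" "wo_succ ord \<alpha> \<gamma>" "(\<beta>, \<gamma>) \<in> ord" "\<beta> \<noteq> \<gamma>"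
  shows "(\<beta>, \<alpha>) \<in> ord"
proof -
  have "\<alpha> \<in> Field ord" "\<beta> \<in> Field ord"
    using assms(2,3) unfolding wo_succ_def by (auto intro: FieldI1)
  then have "(\<beta>, \<alpha>) \<in> ord \<or> (\<alpha>, \<beta>) \<in> ord" "(\<alpha>, \<alpha>) \<in> ord"
    using wo_rel.TOTALS wo_rel.REFL [unfolded refl_on_def] assms(1) unfolding wo_rel_def by blast+
  then show ?thesis using assms(2-4) unfolding wo_succ_def by blast
qed

lemma wo_succ_or_limit_or_least:
  assumes "Well_order ord" "\<gamma> \<in> Field ord"
  obtains \<alpha> where "wo_succ ord \<alpha> \<gamma>" | "wo_limit ord \<gamma>" | "\<And>\<delta>. \<delta> \<in> Field ord \<Longrightarrow> (\<gamma>, \<delta>) \<in> ord"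
proof (cases "\<exists>\<delta>. (\<delta>, \<gamma>) \<in> ord \<and> \<delta> \<noteq> \<gamma>")
  case False
  have "(\<gamma>, \<delta>) \<in> ord" if "\<delta> \<in> Field ord" for \<delta>
    using wo_rel.TOTALS wo_rel.REFL [unfolded refl_on_def] assms that False
    unfolding wo_rel_def by blast
  then show ?thesis using that by blast
qed (use assms that in \<open>auto simp: wo_limit_def\<close>)

locale cell_tower =
  fixes ord :: "('i \<times> 'i) set" and Y :: "'i \<Rightarrow> 'b::qvs pcx"
    and G :: "'i \<Rightarrow> 'i \<Rightarrow> real \<Rightarrow> nat \<Rightarrow> 'b \<Rightarrow> 'b"
    and J :: "'i \<Rightarrow> 'j set" and kk :: "'i \<Rightarrow> 'j \<Rightarrow> nat" and ss :: "'i \<Rightarrow> 'j \<Rightarrow> real"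
    and tt :: "'i \<Rightarrow> 'j \<Rightarrow> ereal" and f h :: "'i \<Rightarrow> 'j \<Rightarrow> real \<Rightarrow> nat \<Rightarrow> rat \<Rightarrow> 'b"
  assumes well_order: "Well_order ord"
    and stage_pcx: "\<beta> \<in> Field ord \<Longrightarrow> is_pcx (Y \<beta>)"
    and stage_hom: "(\<beta>, \<gamma>) \<in> ord \<Longrightarrow> pcx_hom (Y \<beta>) (Y \<gamma>) (G \<beta> \<gamma>)"
    and stage_id: "\<beta> \<in> Field ord \<Longrightarrow> 0 \<le> r \<Longrightarrow> y \<in> cx (Y \<beta>) r m \<Longrightarrow> G \<beta> \<beta> r m y = y"
    and stage_comp: "(\<beta>, \<gamma>) \<in> ord \<Longrightarrow> (\<gamma>, \<delta>) \<in> ord \<Longrightarrow> 0 \<le> r \<Longrightarrow> y \<in> cx (Y \<beta>) r m \<Longrightarrow>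
      G \<gamma> \<delta> r m (G \<beta> \<gamma> r m y) = G \<beta> \<delta> r m y"
    and stage_least: "\<beta> \<in> Field ord \<Longrightarrow> (\<forall>\<gamma>\<in>Field ord. (\<beta>, \<gamma>) \<in> ord) \<Longrightarrow> 0 \<le> r \<Longrightarrow>
      cx (Y \<beta>) r m = {0}"
    and stage_succ: "wo_succ ord \<beta> \<gamma> \<Longrightarrow>
      cell_pushout (Y \<beta>) (Y \<gamma>) (G \<beta> \<gamma>) (J \<beta>) (kk \<beta>) (ss \<beta>) (tt \<beta>) (f \<beta>) (h \<beta>)"
    and stage_limit: "wo_limit ord \<beta> \<Longrightarrow>
      is_chain_colimit ord {\<gamma>. (\<gamma>, \<beta>) \<in> ord \<and> \<gamma> \<noteq> \<beta>} Y G (Y \<beta>) (\<lambda>\<gamma>. G \<gamma> \<beta>)"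
begin

definition stage_invariant :: "'i \<Rightarrow> bool" where
  "stage_invariant \<gamma> \<longleftrightarrow>
     pos_death_attained (Y \<gamma>) \<and> (\<forall>\<beta>. (\<beta>, \<gamma>) \<in> ord \<longrightarrow> pos_injective (Y \<beta>) (G \<beta> \<gamma>))"

lemma pos_injective_stage_id: "\<beta> \<in> Field ord \<Longrightarrow> pos_injective (Y \<beta>) (G \<beta> \<beta>)"
  by (auto intro!: pos_injectiveI simp: stage_id)

lemma least_stage_invariant:
  assumes "\<gamma> \<in> Field ord" "\<forall>\<delta>\<in>Field ord. (\<gamma>, \<delta>) \<in> ord"
  shows "stage_invariant \<gamma>"
proof -
  have "\<beta> = \<gamma>" if "(\<beta>, \<gamma>) \<in> ord" for \<beta>
    using assms that wo_rel.ANTISYM [unfolded antisym_def] well_order FieldI1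
    unfolding wo_rel_def by metis
  then show ?thesis
    using stage_least [OF assms] pos_injective_stage_id [OF assms(1)]
    by (auto simp: stage_invariant_def intro!: pos_death_attainedI)
qed

lemma succ_stage_invariant:
  assumes succ: "wo_succ ord \<alpha> \<gamma>" and IH: "stage_invariant \<alpha>"
  shows "stage_invariant \<gamma>"
proof -
  have \<alpha>\<gamma>: "(\<alpha>, \<gamma>) \<in> ord" using succ unfolding wo_succ_def by blast
  have P: "cell_pushout (Y \<alpha>) (Y \<gamma>) (G \<alpha> \<gamma>) (J \<alpha>) (kk \<alpha>) (ss \<alpha>) (tt \<alpha>) (f \<alpha>) (h \<alpha>)"
    using stage_succ [OF succ] .
  have "pos_injective (Y \<beta>) (G \<beta> \<gamma>)" if \<beta>\<gamma>: "(\<beta>, \<gamma>) \<in> ord" for \<beta>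
  proof (cases "\<beta> = \<gamma>")
    case True
    then show ?thesis using pos_injective_stage_id [OF FieldI2 [OF \<beta>\<gamma>]] by simp
  next
    case False
    then have \<beta>\<alpha>: "(\<beta>, \<alpha>) \<in> ord" using wo_succ_pred [OF well_order succ \<beta>\<gamma>] by blast
    then have "pos_injective (Y \<beta>) (G \<beta> \<alpha>)" using IH by (simp add: stage_invariant_def)
    then show ?thesis
      by (rule pos_injective_comp [OF _ cell_pushout_pos_injective [OF P] stage_hom [OF \<beta>\<alpha>]])
        (rule stage_comp [OF \<beta>\<alpha> \<alpha>\<gamma>, symmetric])
  qed
  moreover have "pos_death_attained (Y \<gamma>)"
    using cell_pushout_pos_death_attained [OF P stage_pcx [OF FieldI1 [OF \<alpha>\<gamma>]]
        stage_pcx [OF FieldI2 [OF \<alpha>\<gamma>]]] IH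
    by (simp add: stage_invariant_def)
  ultimately show ?thesis by (simp add: stage_invariant_def)
qed

lemma limit_stage_invariant:
  assumes lim: "wo_limit ord \<gamma>" and IH: "\<And>\<delta>. (\<delta>, \<gamma>) \<in> ord \<Longrightarrow> \<delta> \<noteq> \<gamma> \<Longrightarrow> stage_invariant \<delta>"
  shows "stage_invariant \<gamma>"
proof -
  define A where "A = {\<delta>. (\<delta>, \<gamma>) \<in> ord \<and> \<delta> \<noteq> \<gamma>}"
  have C: "is_chain_colimit ord A Y G (Y \<gamma>) (\<lambda>\<delta>. G \<delta> \<gamma>)"
    using stage_limit [OF lim] by (simp add: A_def)
  have inj: "pos_injective (Y \<beta>) (G \<beta> \<delta>)" if "\<delta> \<in> A" "(\<beta>, \<delta>) \<in> ord" for \<beta> \<delta>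
    using IH that by (auto simp: A_def stage_invariant_def)
  have "pos_injective (Y \<beta>) (G \<beta> \<gamma>)" if \<beta>\<gamma>: "(\<beta>, \<gamma>) \<in> ord" for \<beta>
  proof (cases "\<beta> = \<gamma>")
    case True
    then show ?thesis using pos_injective_stage_id [OF FieldI2 [OF \<beta>\<gamma>]] by simp
  next
    case False
    then have "\<beta> \<in> A" using \<beta>\<gamma> by (simp add: A_def)
    then show ?thesis by (rule chain_colimit_pos_injective [OF C _ inj])
  qed
  moreover have "pos_death_attained (Y \<gamma>)"
  proof (rule chain_colimit_pos_death_attained [OF C])
    show "\<And>\<delta>. \<delta> \<in> A \<Longrightarrow> is_pcx (Y \<delta>)" by (auto simp: A_def intro: stage_pcx FieldI1)
    show "\<And>\<delta>. \<delta> \<in> A \<Longrightarrow> pos_death_attained (Y \<delta>)"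
      using IH by (auto simp: A_def stage_invariant_def)
  qed (rule inj)
  ultimately show ?thesis by (simp add: stage_invariant_def)
qed

lemma stage_invariant_holds: "\<gamma> \<in> Field ord \<Longrightarrow> stage_invariant \<gamma>"
proof (induction \<gamma> rule: wo_rel.well_order_induct [OF well_order [folded wo_rel_def]])
  case (1 \<gamma>)
  then have \<gamma>: "\<gamma> \<in> Field ord"
    and IH: "\<And>\<delta>. (\<delta>, \<gamma>) \<in> ord \<Longrightarrow> \<delta> \<noteq> \<gamma> \<Longrightarrow> stage_invariant \<delta>"
    by (auto intro: FieldI1)
  from well_order \<gamma> show ?case
  proof (cases rule: wo_succ_or_limit_or_least)
    case (1 \<alpha>)
    then have "stage_invariant \<alpha>" using IH unfolding wo_succ_def by blast
    with 1 show ?thesis by (rule succ_stage_invariant)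
  next
    case 2
    then show ?thesis using IH by (rule limit_stage_invariant)
  next
    case 3
    then show ?thesis using \<gamma> by (intro least_stage_invariant) auto
  qed
qed

lemma colimit_pos_death_attained:
  assumes "is_chain_colimit ord (Field ord) Y G X c"
  shows "pos_death_attained X"
proof (rule chain_colimit_pos_death_attained [OF assms])
  show "\<And>\<gamma>. \<gamma> \<in> Field ord \<Longrightarrow> is_pcx (Y \<gamma>)" by (rule stage_pcx)
  show "\<And>\<gamma>. \<gamma> \<in> Field ord \<Longrightarrow> pos_death_attained (Y \<gamma>)"
    using stage_invariant_holds by (simp add: stage_invariant_def)
  show "\<And>\<gamma> \<delta>. \<delta> \<in> Field ord \<Longrightarrow> (\<gamma>, \<delta>) \<in> ord \<Longrightarrow> pos_injective (Y \<gamma>) (G \<gamma> \<delta>)"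
    using stage_invariant_holds by (simp add: stage_invariant_def)
qed

end

lemma Icell_complexE:
  assumes "Icell_complex TYPE('i) TYPE('b::qvs) TYPE('j) X"
  obtains ord and Y :: "'i \<Rightarrow> 'b::qvs pcx" and G and J :: "'i \<Rightarrow> 'j set" and kk ss tt f h c
  where "cell_tower ord Y G J kk ss tt f h" and "is_chain_colimit ord (Field ord) Y G X c"
  using assms unfolding Icell_complex_def
  apply (elim exE conjE)
  subgoal for ord Y G c J kk ss tt f h
    apply (rule that [of ord Y G J kk ss tt f h c])
     apply unfold_locales
            apply (simp_all add: Ball_def)
    done
  done

theorem mainTheorem19:
  fixes X :: "'a::qvs pcx"
  assumes "Icell_complex TYPE('i) TYPE('b::qvs) TYPE('j) X"
  shows "\<forall>k>0. locally_compact_pmod (\<lambda>r. cx X r k) (\<lambda>r s. tr X r s k)"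
proof -
  obtain ord and Y :: "'i \<Rightarrow> 'b pcx" and G and J :: "'i \<Rightarrow> 'j set" and kk ss tt f h c
    where tower: "cell_tower ord Y G J kk ss tt f h"
      and colimit: "is_chain_colimit ord (Field ord) Y G X c"
    using Icell_complexE [OF assms] .
  have death: "pos_death_attained X"
    using cell_tower.colimit_pos_death_attained [OF tower colimit] .
  show ?thesis
  proof (intro allI impI)
    fix k :: nat assume "0 < k"
    then have "death_attained (\<lambda>r. cx X r k) (\<lambda>r s. tr X r s k)"
      using death by (simp add: pos_death_attained_def)
    then show "locally_compact_pmod (\<lambda>r. cx X r k) (\<lambda>r s. tr X r s k)"
      by (rule locally_compact_if_death_attained [OF is_pcx_pmod [OF chain_colimit_pcx [OF colimit]]])
  qed
qed

end
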